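(* The map $f\colon D_{uz}\to\mathbb{R}^2$ is injective; hence $f$ is a bijection from $D_{uz}$ onto $D_{ab}=f(D_{uz})$.
   Context: Let $D_{uz}=\{(u,z)\in\mathbb{R}^2: 0<u<1,\ 0<z<1\}$. Define $f\colon D_{uz}\to\mathbb{R}^2$ by $f(u,z)=(a(u,z),b(u,z))$, where $a(u,z)$ and $b(u,z)$ are the positive real numbers determined by $$a^2=\frac{u^2+z^2}{u^2z^2+1},\qquad b^2=\frac{(1+u^2)(1+z^2)-2z(1-u^2)}{(1+u^2)(1+z^2)+2z(1-u^2)}$$ (both right-hand sides are positive on $D_{uz}$). Let $D_{ab}=f(D_{uz})$. *)

theory Defs
  imports Complex_Main
begin

definition D_uz :: "(real \<times> real) set" where
  "D_uz = {(u, z). 0 < u \<and> u < 1 \<and> 0 < z \<and> z < 1}"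

definition a_fun :: "real \<Rightarrow> real \<Rightarrow> real" where
  "a_fun u z = sqrt ((u^2 + z^2) / (u^2 * z^2 + 1))"

definition b_fun :: "real \<Rightarrow> real \<Rightarrow> real" where
  "b_fun u z = sqrt (((1 + u^2) * (1 + z^2) - 2 * z * (1 - u^2)) /
                     ((1 + u^2) * (1 + z^2) + 2 * z * (1 - u^2)))"

definition f_map :: "real \<times> real \<Rightarrow> real \<times> real" where
  "f_map p = (a_fun (fst p) (snd p), b_fun (fst p) (snd p))"

definition D_ab :: "(real \<times> real) set" where
  "D_ab = f_map ` D_uz"

end

theory Submission
  imports Defs
begin

(* Write C(t) = (1 - t^2)/(1 + t^2) and S(t) = 2t/(1 + t^2) for the rational
   parametrisation of the unit circle, so C(t)^2 + S(t)^2 = 1, and let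
   K(x) = (1 - x)/(1 + x) be the Cayley transform.  Applied to the radicands
   a^2 and b^2 of f(u,z) it gives
       K(a^2) = C(u) * C(z),      K(b^2) = C(u) * S(z),
   i.e. (K(a^2), K(b^2)) is the point of polar radius C(u) > 0 and angle given
   by z.  Since sqrt is injective, f(u,z) determines a^2 and b^2, hence this
   point, hence its radius C(u) and then C(z); and C is injective on the
   nonnegative reals. *)

definition cayley :: "real \<Rightarrow> real" where
  "cayley x = (1 - x) / (1 + x)"

definition circ_cos :: "real \<Rightarrow> real" where
  "circ_cos t = (1 - t^2) / (1 + t^2)"

definition circ_sin :: "real \<Rightarrow> real" where
  "circ_sin t = 2 * t / (1 + t^2)"

lemma cayley_quotient:
  fixes N D :: real
  assumes "D \<noteq> 0" "D + N \<noteq> 0"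
  shows "cayley (N / D) = (D - N) / (D + N)"
proof -
  have "1 - N / D = (D - N) / D" "1 + N / D = (D + N) / D"
    using assms(1) by (simp_all add: field_simps)
  then show ?thesis
    using assms by (simp add: cayley_def)
qed

lemma one_plus_square_pos: "0 < 1 + (t::real)^2"
  by (simp add: add_pos_nonneg)

lemma cayley_a_radicand:
  fixes u z :: real
  shows "cayley ((u^2 + z^2) / (u^2 * z^2 + 1)) = circ_cos u * circ_cos z"
proof -
  have "0 \<le> u^2 * z^2"
    by simp
  then have den: "u^2 * z^2 + 1 \<noteq> 0"
    by linarith
  have "(u^2 * z^2 + 1) - (u^2 + z^2) = (1 - u^2) * (1 - z^2)"
    and "(u^2 * z^2 + 1) + (u^2 + z^2) = (1 + u^2) * (1 + z^2)"
    by algebra+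
  then show ?thesis
    using cayley_quotient[OF den] one_plus_square_pos[of u] one_plus_square_pos[of z]
    by (simp add: circ_cos_def)
qed

text \<open>The radicand of b is sent by the Cayley transform to C(u) S(z); the
  hypotheses only ensure that the radicand's denominator does not vanish.\<close>
lemma cayley_b_radicand:
  fixes u z :: real
  assumes "u^2 \<le> 1" "0 \<le> z"
  shows "cayley (((1 + u^2) * (1 + z^2) - 2 * z * (1 - u^2)) /
                 ((1 + u^2) * (1 + z^2) + 2 * z * (1 - u^2)))
         = circ_cos u * circ_sin z"
proof -
  define P where "P = (1 + u^2) * (1 + z^2)"
  define Q where "Q = 2 * z * (1 - u^2)"
  have "0 < P"
    unfolding P_def using one_plus_square_pos by simp
  moreover have "0 \<le> Q"
    unfolding Q_def using assms by simp
  ultimately have den: "P + Q \<noteq> 0" and sum: "(P + Q) + (P - Q) \<noteq> 0"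
    by linarith+
  have "cayley ((P - Q) / (P + Q)) = ((P + Q) - (P - Q)) / ((P + Q) + (P - Q))"
    using cayley_quotient[OF den sum] .
  also have "\<dots> = Q / P"
    by (simp add: field_simps)
  also have "\<dots> = circ_cos u * circ_sin z"
    unfolding P_def Q_def circ_cos_def circ_sin_def by (simp add: field_simps)
  finally show ?thesis
    unfolding P_def Q_def .
qed

lemma circ_cos_sin_square: "(circ_cos t)^2 + (circ_sin t)^2 = 1"
proof -
  have "(1 - t^2)^2 + (2 * t)^2 = (1 + t^2)^2"
    by algebra
  then show ?thesis
    using one_plus_square_pos[of t]
    by (simp add: circ_cos_def circ_sin_def power_divide add_divide_distrib[symmetric])
qed

lemma circ_cos_pos:
  assumes "\<bar>t\<bar> < 1"
  shows "0 < circ_cos t"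
proof -
  have "t^2 < 1"
    using assms by (simp add: abs_square_less_1)
  then show ?thesis
    using one_plus_square_pos[of t] by (simp add: circ_cos_def)
qed

lemma circ_cos_inj:
  fixes s t :: real
  assumes "0 \<le> s" "0 \<le> t" "circ_cos s = circ_cos t"
  shows "s = t"
proof -
  have "s^2 = t^2"
    using assms(3) one_plus_square_pos[of s] one_plus_square_pos[of t]
    by (simp add: circ_cos_def field_simps)
  then show ?thesis
    using assms(1,2) by simp
qed

lemma polar_unique:
  fixes r r' x y x' y' :: real
  assumes "x^2 + y^2 = 1" "x'^2 + y'^2 = 1" "0 < r" "0 < r'"
    and "r * x = r' * x'" "r * y = r' * y'"
  shows "r = r'" and "x = x'"
proof -
  have "r^2 = (r * x)^2 + (r * y)^2"
    using assms(1) by (simp add: power_mult_distrib distrib_left[symmetric])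
  also have "\<dots> = (r' * x')^2 + (r' * y')^2"
    using assms(5,6) by simp
  also have "\<dots> = r'^2"
    using assms(2) by (simp add: power_mult_distrib distrib_left[symmetric])
  finally show "r = r'"
    using assms(3,4) by simp
  then show "x = x'"
    using assms(4,5) by simp
qed

lemma f_map_inj_on: "inj_on f_map D_uz"
proof (rule inj_onI)
  fix p q
  assume "p \<in> D_uz" "q \<in> D_uz" and f_eq: "f_map p = f_map q"
  obtain u z v w where p: "p = (u, z)" and q: "q = (v, w)"
    by (cases p, cases q)
  have bounds: "\<bar>u\<bar> < 1" "\<bar>z\<bar> < 1" "\<bar>v\<bar> < 1" "\<bar>w\<bar> < 1"
    "0 \<le> u" "0 \<le> z" "0 \<le> v" "0 \<le> w"
    using \<open>p \<in> D_uz\<close> \<open>q \<in> D_uz\<close> by (auto simp: p q D_uz_def)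
  then have squares: "u^2 \<le> 1" "v^2 \<le> 1"
    by (simp_all add: power_le_one)
  text \<open>Since sqrt is injective, f determines both radicands, hence their
    Cayley transforms.\<close>
  have "cayley ((u^2 + z^2) / (u^2 * z^2 + 1)) = cayley ((v^2 + w^2) / (v^2 * w^2 + 1))"
    using f_eq by (simp add: p q f_map_def a_fun_def)
  then have cos_eq: "circ_cos u * circ_cos z = circ_cos v * circ_cos w"
    by (simp only: cayley_a_radicand)
  have "cayley (((1 + u^2) * (1 + z^2) - 2 * z * (1 - u^2)) /
                ((1 + u^2) * (1 + z^2) + 2 * z * (1 - u^2)))
      = cayley (((1 + v^2) * (1 + w^2) - 2 * w * (1 - v^2)) /
                ((1 + v^2) * (1 + w^2) + 2 * w * (1 - v^2)))"
    using f_eq by (simp add: p q f_map_def b_fun_def)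
  then have sin_eq: "circ_cos u * circ_sin z = circ_cos v * circ_sin w"
    using squares bounds by (simp only: cayley_b_radicand)
  have "circ_cos u = circ_cos v" and "circ_cos z = circ_cos w"
    using polar_unique[OF circ_cos_sin_square circ_cos_sin_square
        circ_cos_pos circ_cos_pos cos_eq sin_eq] bounds by auto
  then show "p = q"
    using circ_cos_inj bounds by (simp add: p q)
qed

theorem mainTheorem3:
  shows "inj_on f_map D_uz \<and> bij_betw f_map D_uz D_ab"
  using f_map_inj_on inj_on_imp_bij_betw by (simp add: D_ab_def)

end
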